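(* Let $(R,\mathcal{T})$ be an AF-equivalence relation on a compact, metrizable, zero-dimensional space $X$, the inductive limit of an ascending sequence of CEERs $\Delta_X=R_0\subset R_1\subset R_2\subset\cdots$. Let $(S,\widetilde{\mathcal{T}})$ be a CEER on $X$ which is transverse to $R$. Then there exists an ascending sequence of CEERs $\Delta_X=R'_0\subset R'_1\subset R'_2\subset\cdots$ on $X$ such that $(R,\mathcal{T})$ is the inductive limit of $(R'_n,\mathcal{T}'_n)$ and $R'_n$ is transverse to $S$ for every $n$.
   Context: An étale equivalence relation on $X$ is a countable equivalence relation $R\subset X\times X$ with a locally compact, Hausdorff, second countable topology in which the product $(x,y)\cdot(y,z)=(x,z)$ of composable pairs is continuous, the inverse is a homeomorphism, and $r(x,y)=x$ is a local homeomorphism; a CEER is a compact étale equivalence relation. An AF-equivalence relation is $R=\bigcup_nR_n$ for an ascending sequence of CEERs $\Delta_X=R_0\subset R_1\subset\cdots$ with $R_n$ open in $R_{n+1}$, equipped with the inductive limit topology ($U$ open iff $U\cap R_n$ is open in $R_n$ for all $n$). $R\times_XS=\{((x,y),(y,z)):(x,y)\in R,(y,z)\in S\}$ with the relative topology from $R\times S$; étale equivalence relations $R,S$ are transverse if $R\cap S=\Delta_X$ and there is a homeomorphism $h:R\times_XS\to S\times_XR$ with $r\circ h=r$, $s\circ h=s$, where $r((x,y),(y,z))=x$, $s((x,y),(y,z))=z$. *)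

theory Defs
  imports "HOL-Analysis.Analysis"
begin

definition rmap :: "'a \<times> 'a \<Rightarrow> 'a" where "rmap p = fst p"

definition local_homeomorphism_map :: "'b topology \<Rightarrow> 'a topology \<Rightarrow> ('b \<Rightarrow> 'a) \<Rightarrow> bool" where
  "local_homeomorphism_map T X f \<longleftrightarrow>
     f ` topspace T \<subseteq> topspace X \<and>
     (\<forall>p \<in> topspace T. \<exists>U. openin T U \<and> p \<in> U \<and> openin X (f ` U) \<and>
         homeomorphic_map (subtopology T U) (subtopology X (f ` U)) f)"

definition composable :: "('a \<times> 'a) set \<Rightarrow> (('a \<times> 'a) \<times> ('a \<times> 'a)) set" where
  "composable R = {((x,y),(y',z)). (x,y) \<in> R \<and> (y',z) \<in> R \<and> y = y'}"

definition etale_eqrel :: "'a topology \<Rightarrow> ('a \<times> 'a) set \<Rightarrow> ('a \<times> 'a) topology \<Rightarrow> bool" where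
  "etale_eqrel X R T \<longleftrightarrow>
     equiv (topspace X) R \<and>
     (\<forall>x \<in> topspace X. countable (R `` {x})) \<and>
     topspace T = R \<and>
     locally_compact_space T \<and> Hausdorff_space T \<and> second_countable T \<and>
     continuous_map (subtopology (prod_topology T T) (composable R)) T
        (\<lambda>((x,y),(y',z)). (x,z)) \<and>
     homeomorphic_map T T (\<lambda>(x,y). (y,x)) \<and>
     local_homeomorphism_map T X rmap"

definition CEER :: "'a topology \<Rightarrow> ('a \<times> 'a) set \<Rightarrow> ('a \<times> 'a) topology \<Rightarrow> bool" where
  "CEER X R T \<longleftrightarrow> etale_eqrel X R T \<and> compact_space T"

definition fibprod :: "('a \<times> 'a) set \<Rightarrow> ('a \<times> 'a) set \<Rightarrow> (('a \<times> 'a) \<times> ('a \<times> 'a)) set" where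
  "fibprod R S = {((x,y),(y',z)). (x,y) \<in> R \<and> (y',z) \<in> S \<and> y = y'}"

definition fibprod_top :: "('a \<times> 'a) set \<Rightarrow> ('a \<times> 'a) topology \<Rightarrow> ('a \<times> 'a) set
    \<Rightarrow> ('a \<times> 'a) topology \<Rightarrow> (('a \<times> 'a) \<times> ('a \<times> 'a)) topology" where
  "fibprod_top R T S T' = subtopology (prod_topology T T') (fibprod R S)"

definition transverse :: "'a topology \<Rightarrow> ('a \<times> 'a) set \<Rightarrow> ('a \<times> 'a) topology
    \<Rightarrow> ('a \<times> 'a) set \<Rightarrow> ('a \<times> 'a) topology \<Rightarrow> bool" where
  "transverse X R T S T' \<longleftrightarrow>
     R \<inter> S = Id_on (topspace X) \<and>
     (\<exists>h. homeomorphic_map (fibprod_top R T S T') (fibprod_top S T' R T) h \<and>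
          (\<forall>q \<in> fibprod R S. fst (fst (h q)) = fst (fst q) \<and> snd (snd (h q)) = snd (snd q)))"

definition AF_presentation :: "'a topology \<Rightarrow> ('a \<times> 'a) set \<Rightarrow> ('a \<times> 'a) topology
    \<Rightarrow> (nat \<Rightarrow> ('a \<times> 'a) set) \<Rightarrow> (nat \<Rightarrow> ('a \<times> 'a) topology) \<Rightarrow> bool" where
  "AF_presentation X R T Rs Ts \<longleftrightarrow>
     (\<forall>n. CEER X (Rs n) (Ts n)) \<and>
     Rs 0 = Id_on (topspace X) \<and>
     (\<forall>n. Rs n \<subseteq> Rs (Suc n) \<and> openin (Ts (Suc n)) (Rs n) \<and>
          Ts n = subtopology (Ts (Suc n)) (Rs n)) \<and>
     R = (\<Union>n. Rs n) \<and>
     topspace T = R \<and>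
     (\<forall>U. openin T U \<longleftrightarrow> U \<subseteq> R \<and> (\<forall>n. openin (Ts n) (U \<inter> Rs n)))"

end

theory Submission
  imports Defs
begin

text \<open>By transversality every square \<open>x R y S z\<close> completes uniquely to a square \<open>x S w R z\<close>,
  so pairs of \<open>R\<close> can be transported along \<open>S\<close>, \<open>(x,y) \<mapsto> (w,z)\<close>. Let \<open>R'\<^sub>n\<close> consist of the
  pairs of \<open>R\<^sub>n\<close> all of whose transports stay in \<open>R\<^sub>n\<close>. Since \<open>S\<close> is transitive, \<open>R'\<^sub>n\<close> is closed
  under transport; this makes it an equivalence relation, and it makes the transversality homeomorphism
  restrict to \<open>R'\<^sub>n \<times>\<^sub>X S \<cong> S \<times>\<^sub>X R'\<^sub>n\<close>. The \<open>S\<close>-classes are finite (fibres of a local homeomorphism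
  on a compact space), so a pair of \<open>R\<close> has finitely many transports and lies in some \<open>R'\<^sub>n\<close>.
  Finally the complement of \<open>R'\<^sub>n\<close> in \<open>R\<^sub>n\<close> is the projection of a clopen subset of the compact
  space \<open>R\<^sub>n \<times>\<^sub>X S\<close>; the projection is closed by compactness and open because the range map of \<open>S\<close>
  is open. Hence \<open>R'\<^sub>n\<close> is clopen in \<open>R\<^sub>n\<close>, so it is again a CEER, and the \<open>R'\<^sub>n\<close> exhaust \<open>R\<close>
  with its inductive limit topology.\<close>

lemma rmap_eq_fst: "rmap = fst"
  by (simp add: rmap_def fun_eq_iff)

lemma continuous_map_local_homeomorphism_map:
  assumes "local_homeomorphism_map T X f"
  shows "continuous_map T X f"
proof (rule pasting_lemma[where I = "{U. openin T U \<and> continuous_map (subtopology T U) X f}"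
      and T = id and f = "\<lambda>_. f"])
  fix p assume "p \<in> topspace T"
  then obtain U where "openin T U" "p \<in> U" "homeomorphic_map (subtopology T U) (subtopology X (f ` U)) f"
    using assms unfolding local_homeomorphism_map_def by blast
  then show "\<exists>U. U \<in> {U. openin T U \<and> continuous_map (subtopology T U) X f} \<and> p \<in> id U \<and> f p = f p"
    by (metis (mono_tags) homeomorphic_imp_continuous_map continuous_map_in_subtopology id_apply mem_Collect_eq)
qed auto

lemma open_map_local_homeomorphism_map:
  assumes "local_homeomorphism_map T X f"
  shows "open_map T X f"
  unfolding open_map_def
proof (intro allI impI)
  fix V assume V: "openin T V"
  show "openin X (f ` V)"
  proof (subst openin_subopen, intro ballI)
    fix y assume "y \<in> f ` V"
    then obtain p where p: "p \<in> V" "y = f p" by blast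
    then obtain U where U: "openin T U" "p \<in> U" "openin X (f ` U)"
      "homeomorphic_map (subtopology T U) (subtopology X (f ` U)) f"
      using assms V openin_subset unfolding local_homeomorphism_map_def by blast
    have "openin (subtopology X (f ` U)) (f ` (V \<inter> U))"
      using homeomorphic_map_openness[OF U(4)] V openin_subset[OF V]
      by (metis openin_subtopology_Int openin_subset)
    then have "openin X (f ` (V \<inter> U))" using U(3) openin_trans_full by blast
    then show "\<exists>W. openin X W \<and> y \<in> W \<and> W \<subseteq> f ` V"
      using p U(2) by blast
  qed
qed

lemma local_homeomorphism_map_subtopology:
  assumes f: "local_homeomorphism_map T X f" and W: "openin T W"
  shows "local_homeomorphism_map (subtopology T W) X f"
  unfolding local_homeomorphism_map_def
proof (intro conjI ballI)
  have fX: "f ` topspace T \<subseteq> topspace X"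
    using f unfolding local_homeomorphism_map_def by blast
  then show "f ` topspace (subtopology T W) \<subseteq> topspace X"
    by auto
  fix p assume "p \<in> topspace (subtopology T W)"
  then obtain U where U: "openin T U" "p \<in> U" "p \<in> W"
      "homeomorphic_map (subtopology T U) (subtopology X (f ` U)) f"
    using f unfolding local_homeomorphism_map_def by auto
  have UW: "openin T (U \<inter> W)" using U(1) W by blast
  have "homeomorphic_map (subtopology (subtopology T U) (U \<inter> W))
      (subtopology (subtopology X (f ` U)) (f ` (U \<inter> W))) f"
    by (rule homeomorphic_map_subtopologies[OF U(4)])
      (use fX openin_subset[OF U(1)] in \<open>auto simp: Int_absorb1\<close>)
  then have "homeomorphic_map (subtopology T (U \<inter> W)) (subtopology X (f ` (U \<inter> W))) f"
    by (simp add: subtopology_subtopology Int_absorb1 image_mono)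
  moreover have "openin (subtopology T W) (U \<inter> W)"
    using U(1) openin_subtopology by blast
  ultimately show "\<exists>V. openin (subtopology T W) V \<and> p \<in> V \<and> openin X (f ` V) \<and>
      homeomorphic_map (subtopology (subtopology T W) V) (subtopology X (f ` V)) f"
    using UW U(2,3) open_map_local_homeomorphism_map[OF f]
    by (intro exI[of _ "U \<inter> W"])
      (auto simp: open_map_def subtopology_subtopology Int_absorb1 inf_commute)
qed

lemma finite_fibre_local_homeomorphism_map:
  assumes f: "local_homeomorphism_map T X f" and "compact_space T" "t1_space X" "y \<in> topspace X"
  shows "finite {p \<in> topspace T. f p = y}"
proof -
  let ?K = "{p \<in> topspace T. f p = y}"
  have "closedin T ?K"
    using closedin_continuous_map_preimage[OF continuous_map_local_homeomorphism_map[OF f]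
        closedin_t1_singleton[OF assms(3,4)]] by simp
  then have "compactin T ?K" using closedin_compact_space assms(2) by blast
  moreover have "?K \<subseteq> \<Union>{U. openin T U \<and> inj_on f U}"
  proof
    fix p assume "p \<in> ?K"
    then obtain U where "openin T U" "p \<in> U"
      "homeomorphic_map (subtopology T U) (subtopology X (f ` U)) f"
      using f unfolding local_homeomorphism_map_def by blast
    moreover have "inj_on f U"
      using homeomorphic_imp_injective_map[OF \<open>homeomorphic_map _ _ f\<close>] openin_subset[OF \<open>openin T U\<close>]
      by (simp add: Int_absorb1)
    ultimately show "p \<in> \<Union>{U. openin T U \<and> inj_on f U}" by blast
  qed
  ultimately obtain \<F> where \<F>: "finite \<F>" "\<F> \<subseteq> {U. openin T U \<and> inj_on f U}" "?K \<subseteq> \<Union>\<F>"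
    unfolding compactin_def by (metis (no_types, lifting) mem_Collect_eq)
  have "finite (?K \<inter> U)" if "U \<in> \<F>" for U
  proof -
    have "inj_on f (?K \<inter> U)" using \<F>(2) that inj_on_subset by blast
    moreover have "f ` (?K \<inter> U) \<subseteq> {y}" by blast
    ultimately show ?thesis using inj_on_finite by blast
  qed
  then have "finite (\<Union>U\<in>\<F>. ?K \<inter> U)" using \<F>(1) by blast
  moreover have "?K = (\<Union>U\<in>\<F>. ?K \<inter> U)" using \<F>(3) by blast
  ultimately show ?thesis by simp
qed

lemma CEER_clopen_subrelation:
  assumes CE: "CEER X R T" and A: "equiv (topspace X) A" "openin T A" "closedin T A"
  shows "CEER X A (subtopology T A)"
proof -
  have et: "etale_eqrel X R T" and cpt: "compact_space T"
    using CE unfolding CEER_def by blast+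
  have AR: "A \<subseteq> R"
    using openin_subset[OF A(2)] et unfolding etale_eqrel_def by blast
  have top: "topspace (subtopology T A) = A"
    using openin_subset[OF A(2)] by (simp add: Int_absorb1)
  have "countable (A `` {x})" if "x \<in> topspace X" for x
    using et that AR countable_subset[of "A `` {x}" "R `` {x}"] unfolding etale_eqrel_def by blast
  moreover have "continuous_map (subtopology (prod_topology (subtopology T A) (subtopology T A)) (composable A))
      (subtopology T A) (\<lambda>((x,y),(y',z)). (x,z))"
  proof -
    have "continuous_map (subtopology (prod_topology T T) (composable R)) T (\<lambda>((x,y),(y',z)). (x,z))"
      using et unfolding etale_eqrel_def by blast
    moreover have "composable A \<subseteq> composable R" using AR unfolding composable_def by blast
    ultimately have "continuous_map (subtopology (prod_topology T T) (composable A)) T (\<lambda>((x,y),(y',z)). (x,z))"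
      using continuous_map_from_subtopology_mono by blast
    moreover have "(\<lambda>((x,y),(y',z)). (x,z)) \<in> topspace (subtopology (prod_topology T T) (composable A)) \<rightarrow> A"
      using A(1) unfolding composable_def equiv_def trans_def by auto
    ultimately have "continuous_map (subtopology (prod_topology T T) (composable A)) (subtopology T A)
        (\<lambda>((x,y),(y',z)). (x,z))"
      by (rule continuous_map_into_subtopology)
    moreover have "(A \<times> A) \<inter> composable A = composable A" unfolding composable_def by blast
    ultimately show ?thesis
      by (simp add: subtopology_Times[symmetric] subtopology_subtopology)
  qed
  moreover have "homeomorphic_map (subtopology T A) (subtopology T A) (\<lambda>(x,y). (y,x))"
  proof (rule homeomorphic_map_subtopologies)
    show "homeomorphic_map T T (\<lambda>(x,y). (y,x))" using et unfolding etale_eqrel_def by blast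
    have "(\<lambda>(x,y). (y,x)) ` A = A"
      using A(1) unfolding equiv_def sym_def by force
    then show "(\<lambda>(x,y). (y,x)) ` (topspace T \<inter> A) = topspace T \<inter> A"
      using top by simp
  qed
  moreover have "local_homeomorphism_map (subtopology T A) X rmap"
    using local_homeomorphism_map_subtopology et A(2) unfolding etale_eqrel_def by blast
  moreover have "compact_space (subtopology T A)"
    using closedin_compact_space[OF cpt A(3)] compact_space_subtopology by blast
  ultimately show ?thesis
    using A(1) top et
    by (simp add: CEER_def etale_eqrel_def compact_imp_locally_compact_space
        Hausdorff_space_subtopology second_countable_subtopology)
qed

lemma continuous_map_snd_etale_eqrel:
  assumes "etale_eqrel X R T"
  shows "continuous_map T X snd"
proof -
  have "continuous_map T X (fst \<circ> (\<lambda>(x,y). (y,x)))"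
    using assms unfolding etale_eqrel_def rmap_eq_fst
    by (metis continuous_map_compose homeomorphic_imp_continuous_map continuous_map_local_homeomorphism_map)
  moreover have "fst \<circ> (\<lambda>(x,y). (y,x)) = snd" by (auto simp: fun_eq_iff)
  ultimately show ?thesis by metis
qed

lemma closedin_fibprod:
  assumes "Hausdorff_space X" "continuous_map TA X snd" "continuous_map TB X fst"
    and "topspace TA = A" "topspace TB = B"
  shows "closedin (prod_topology TA TB) (fibprod A B)"
proof -
  have "closedin (prod_topology TA TB) {q \<in> topspace (prod_topology TA TB). (snd \<circ> fst) q = (fst \<circ> snd) q}"
    by (rule closedin_continuous_maps_eq[OF assms(1)] continuous_map_compose[OF continuous_map_fst assms(2)]
        continuous_map_compose[OF continuous_map_snd assms(3)])+
  moreover have "{q \<in> topspace (prod_topology TA TB). (snd \<circ> fst) q = (fst \<circ> snd) q} = fibprod A B"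
    using assms(4,5) by (auto simp: fibprod_def)
  ultimately show ?thesis by simp
qed

lemma open_map_fibprod_fst:
  assumes snd: "continuous_map TA X snd" and fst: "open_map TB X fst"
    and "topspace TA = A" "topspace TB = B"
  shows "open_map (fibprod_top A TA B TB) TA fst"
  unfolding open_map_def
proof (intro allI impI)
  fix W assume "openin (fibprod_top A TA B TB) W"
  then obtain W' where W': "openin (prod_topology TA TB) W'" "W = W' \<inter> fibprod A B"
    unfolding fibprod_top_def openin_subtopology by blast
  show "openin TA (fst ` W)"
  proof (subst openin_subopen, intro ballI)
    fix r assume "r \<in> fst ` W"
    then obtain s where rs: "(r,s) \<in> W" by force
    then obtain U V where UV: "openin TA U" "openin TB V" "r \<in> U" "s \<in> V" "U \<times> V \<subseteq> W'"
      using W' openin_prod_topology_alt by (metis Int_iff)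
    define N where "N = {r' \<in> U. snd r' \<in> fst ` V}"
    have "openin TA {r' \<in> topspace TA. snd r' \<in> fst ` V}"
      using openin_continuous_map_preimage[OF snd] fst UV(2) unfolding open_map_def by blast
    moreover have "N = U \<inter> {r' \<in> topspace TA. snd r' \<in> fst ` V}"
      using openin_subset[OF UV(1)] unfolding N_def by blast
    ultimately have "openin TA N" using UV(1) by auto
    moreover have "r \<in> N"
      using rs UV(3,4) W'(2) unfolding N_def fibprod_def by force
    moreover have "N \<subseteq> fst ` W"
    proof
      fix r' assume "r' \<in> N"
      then obtain s' where s': "s' \<in> V" "snd r' = fst s'" "r' \<in> U"
        unfolding N_def by blast
      then have "(r',s') \<in> fibprod A B"
        using openin_subset[OF UV(1)] openin_subset[OF UV(2)] assms(3,4)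
        unfolding fibprod_def by (cases r', cases s') auto
      then show "r' \<in> fst ` W" using UV(5) s' W'(2) by force
    qed
    ultimately show "\<exists>N. openin TA N \<and> r \<in> N \<and> N \<subseteq> fst ` W" by blast
  qed
qed

lemma fibprod_top_subtopology_left:
  assumes "A \<subseteq> R" "S \<subseteq> topspace TS"
  shows "fibprod_top A (subtopology T A) S TS = subtopology (fibprod_top R T S TS) (fibprod A S)"
proof -
  have "(A \<times> topspace TS) \<inter> fibprod A S = fibprod R S \<inter> fibprod A S"
    using assms unfolding fibprod_def by auto
  then show ?thesis unfolding fibprod_top_def
    by (simp add: prod_topology_subtopology subtopology_subtopology)
qed

lemma fibprod_top_subtopology_right:
  assumes "A \<subseteq> R" "S \<subseteq> topspace TS"
  shows "fibprod_top S TS A (subtopology T A) = subtopology (fibprod_top S TS R T) (fibprod S A)"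
proof -
  have "(topspace TS \<times> A) \<inter> fibprod S A = fibprod S R \<inter> fibprod S A"
    using assms unfolding fibprod_def by auto
  then show ?thesis unfolding fibprod_top_def
    by (simp add: prod_topology_subtopology subtopology_subtopology)
qed

lemma transverse_subrelation:
  assumes h: "homeomorphic_map (fibprod_top R T S TS) (fibprod_top S TS R T) h"
    and ends: "\<forall>q \<in> fibprod R S. fst (fst (h q)) = fst (fst q) \<and> snd (snd (h q)) = snd (snd q)"
    and A: "A \<subseteq> R" "A \<inter> S = Id_on (topspace X)" "h ` fibprod A S = fibprod S A"
    and tops: "topspace T = R" "topspace TS = S"
  shows "transverse X A (subtopology T A) S TS"
  unfolding transverse_def
proof (intro conjI exI)
  show "A \<inter> S = Id_on (topspace X)" by (fact A(2))
  have sub: "fibprod A S \<subseteq> fibprod R S" "fibprod S A \<subseteq> fibprod S R"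
    using A(1) unfolding fibprod_def by auto
  have "topspace (fibprod_top R T S TS) = fibprod R S" "topspace (fibprod_top S TS R T) = fibprod S R"
    using tops unfolding fibprod_top_def fibprod_def by auto
  moreover have "fibprod_top A (subtopology T A) S TS = subtopology (fibprod_top R T S TS) (fibprod A S)"
      "fibprod_top S TS A (subtopology T A) = subtopology (fibprod_top S TS R T) (fibprod S A)"
    by (simp_all add: fibprod_top_subtopology_left[OF A(1)] fibprod_top_subtopology_right[OF A(1)] tops(2))
  ultimately show "homeomorphic_map (fibprod_top A (subtopology T A) S TS)
      (fibprod_top S TS A (subtopology T A)) h"
    using sub A(3) homeomorphic_map_subtopologies[OF h] by (simp add: Int_absorb1)
  show "\<forall>q\<in>fibprod A S. fst (fst (h q)) = fst (fst q) \<and> snd (snd (h q)) = snd (snd q)"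
    using ends sub by blast
qed

lemma AF_presentation_open_exhaustion:
  assumes tops: "topspace T = R" and CE: "\<And>n. CEER X (A n) (subtopology T (A n))"
    and A0: "A 0 = Id_on (topspace X)" and mono: "\<And>n. A n \<subseteq> A (Suc n)"
    and opn: "\<And>n. openin T (A n)" and Un: "R = (\<Union>n. A n)"
  shows "AF_presentation X R T A (\<lambda>n. subtopology T (A n))"
proof -
  have step_open: "openin (subtopology T (A (Suc n))) (A n)" for n
    using openin_subtopology_Int[OF opn[of n], of "A (Suc n)"] mono by (simp add: Int_absorb2)
  have step_top: "subtopology T (A n) = subtopology (subtopology T (A (Suc n))) (A n)" for n
    using mono by (simp add: subtopology_subtopology Int_absorb1)
  have limit_top: "openin T U \<longleftrightarrow> U \<subseteq> R \<and> (\<forall>n. openin (subtopology T (A n)) (U \<inter> A n))" for U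
  proof
    assume "openin T U"
    then show "U \<subseteq> R \<and> (\<forall>n. openin (subtopology T (A n)) (U \<inter> A n))"
      using openin_subset tops openin_subtopology_Int by blast
  next
    assume U: "U \<subseteq> R \<and> (\<forall>n. openin (subtopology T (A n)) (U \<inter> A n))"
    then have "openin T (U \<inter> A n)" for n using openin_trans_full opn by blast
    then have "openin T (\<Union>n. U \<inter> A n)" by blast
    moreover have "(\<Union>n. U \<inter> A n) = U" using U Un by blast
    ultimately show "openin T U" by simp
  qed
  show ?thesis
    unfolding AF_presentation_def by (intro conjI allI CE A0 mono step_open step_top Un tops limit_top)
qed

lemma finite_subset_Union_incseq:
  fixes F :: "nat \<Rightarrow> 'b set"
  assumes "incseq F" "finite A" "A \<subseteq> (\<Union>n. F n)"
  obtains m where "A \<subseteq> F m"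
proof -
  from assms(2,3) have "\<exists>m. A \<subseteq> F m"
  proof (induction A rule: finite_induct)
    case (insert a A)
    then obtain m k where "A \<subseteq> F m" "a \<in> F k" by blast
    then have "insert a A \<subseteq> F (max m k)"
      using incseqD[OF assms(1)] by (meson insert_subset max.cobounded1 max.cobounded2 subsetD subset_trans)
    then show ?case by blast
  qed simp
  then show thesis using that by blast
qed

locale AF_limit =
  fixes X :: "'a topology" and R :: "('a \<times> 'a) set" and T :: "('a \<times> 'a) topology"
    and Rs :: "nat \<Rightarrow> ('a \<times> 'a) set" and Ts :: "nat \<Rightarrow> ('a \<times> 'a) topology"
  assumes AF: "AF_presentation X R T Rs Ts"
begin

lemma CEER_Rs: "CEER X (Rs n) (Ts n)"
  using AF unfolding AF_presentation_def by (elim conjE allE)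

lemma Rs_0: "Rs 0 = Id_on (topspace X)"
  using AF unfolding AF_presentation_def by (elim conjE allE)

lemma Rs_Suc: "Rs n \<subseteq> Rs (Suc n)"
  using AF unfolding AF_presentation_def by (elim conjE allE)

lemma openin_Ts_Suc_Rs: "openin (Ts (Suc n)) (Rs n)"
  using AF unfolding AF_presentation_def by (elim conjE allE)

lemma Ts_eq_subtopology_Suc: "Ts n = subtopology (Ts (Suc n)) (Rs n)"
  using AF unfolding AF_presentation_def by (elim conjE allE)

lemma R_eq_Union: "R = (\<Union>n. Rs n)"
  using AF unfolding AF_presentation_def by (elim conjE allE)

lemma topspace_T: "topspace T = R"
  using AF unfolding AF_presentation_def by (elim conjE allE)

lemma openin_T_iff: "openin T U \<longleftrightarrow> U \<subseteq> R \<and> (\<forall>n. openin (Ts n) (U \<inter> Rs n))"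
  using AF unfolding AF_presentation_def by (elim conjE allE)

lemma etale_eqrel_Rs: "etale_eqrel X (Rs n) (Ts n)"
  using CEER_Rs unfolding CEER_def by blast

lemma topspace_Ts: "topspace (Ts n) = Rs n"
  using etale_eqrel_Rs unfolding etale_eqrel_def by blast

lemma equiv_Rs: "equiv (topspace X) (Rs n)"
  using etale_eqrel_Rs unfolding etale_eqrel_def by blast

lemma incseq_Rs: "incseq Rs"
  using Rs_Suc by (rule incseq_SucI)

lemma Rs_subset_R: "Rs n \<subseteq> R"
  using R_eq_Union by blast

lemma equiv_R: "equiv (topspace X) R"
proof -
  have "R \<subseteq> topspace X \<times> topspace X" "Id_on (topspace X) \<subseteq> R" "sym R"
    using equiv_Rs R_eq_Union Rs_0 unfolding equiv_def refl_on_def sym_def by blast+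
  moreover have "trans R"
  proof (rule transI)
    fix x y z assume "(x,y) \<in> R" "(y,z) \<in> R"
    then obtain m where "{(x,y),(y,z)} \<subseteq> Rs m"
      using finite_subset_Union_incseq[OF incseq_Rs, of "{(x,y),(y,z)}"] R_eq_Union by auto
    then show "(x,z) \<in> R"
      using equiv_Rs[of m] Rs_subset_R unfolding equiv_def trans_def by blast
  qed
  ultimately show ?thesis unfolding equiv_def refl_on_def by blast
qed

lemma Ts_eq_subtopology: "m \<le> n \<Longrightarrow> Ts m = subtopology (Ts n) (Rs m)"
proof (induction n rule: dec_induct)
  case base
  then show ?case using topspace_Ts by (metis subtopology_topspace)
next
  case (step n)
  then show ?case
    using Ts_eq_subtopology_Suc[of n] incseqD[OF incseq_Rs \<open>m \<le> n\<close>]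
    by (simp add: subtopology_subtopology Int_absorb1)
qed

lemma openin_Ts_mono: "m \<le> n \<Longrightarrow> openin (Ts m) V \<Longrightarrow> openin (Ts n) V"
proof (induction n rule: dec_induct)
  case (step n)
  then show ?case
    using Ts_eq_subtopology_Suc[of n] openin_Ts_Suc_Rs openin_trans_full by metis
qed

lemma openin_T_if_openin_Ts:
  assumes V: "openin (Ts n) V"
  shows "openin T V"
proof -
  have V_sub: "V \<subseteq> Rs n" using openin_subset[OF V] topspace_Ts by simp
  have "openin (Ts m) (V \<inter> Rs m)" for m
  proof (cases "n \<le> m")
    case True
    then have "V \<inter> Rs m = V" using V_sub incseqD[OF incseq_Rs] by blast
    then show ?thesis using openin_Ts_mono[OF True V] by simp
  next
    case False
    then show ?thesis using Ts_eq_subtopology[of m n] V openin_subtopology_Int by simp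
  qed
  then show ?thesis using openin_T_iff V_sub Rs_subset_R by blast
qed

lemma subtopology_T_Rs: "subtopology T (Rs n) = Ts n"
  unfolding topology_eq
proof (intro allI iffI)
  fix V assume "openin (subtopology T (Rs n)) V"
  then show "openin (Ts n) V" using openin_T_iff openin_subtopology by metis
next
  fix V assume V: "openin (Ts n) V"
  then have "V = V \<inter> Rs n" using openin_subset topspace_Ts by blast
  then show "openin (subtopology T (Rs n)) V"
    using openin_T_if_openin_Ts[OF V] openin_subtopology by metis
qed

lemma openin_T_Rs: "openin T (Rs n)"
  using openin_T_if_openin_Ts[of n "Rs n"] topspace_Ts by (metis openin_topspace)

text \<open>The complement of \<open>R\<^sub>n\<close> is open as well: inside each \<open>R\<^sub>m\<close>, \<open>m \<ge> n\<close>, the compact set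
  \<open>R\<^sub>n\<close> is closed.\<close>
lemma openin_T_diff_Rs: "openin T (R - Rs n)"
proof -
  have "openin (Ts m) ((R - Rs n) \<inter> Rs m)" for m
  proof (cases "m \<le> n")
    case True
    then have "(R - Rs n) \<inter> Rs m = {}" using incseqD[OF incseq_Rs] by blast
    then show ?thesis by simp
  next
    case False
    then have "subtopology (Ts m) (Rs n) = Ts n" using Ts_eq_subtopology[of n m] by simp
    then have "compactin (Ts m) (Rs n)"
      using CEER_Rs[of n] topspace_Ts incseqD[OF incseq_Rs, of n m] False
      by (simp add: compactin_subspace CEER_def)
    moreover have "Hausdorff_space (Ts m)"
      using etale_eqrel_Rs unfolding etale_eqrel_def by blast
    ultimately have "closedin (Ts m) (Rs n)"
      using compactin_imp_closedin by blast
    then have "openin (Ts m) (topspace (Ts m) - Rs n)" by blast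
    moreover have "topspace (Ts m) - Rs n = (R - Rs n) \<inter> Rs m"
      using topspace_Ts Rs_subset_R by blast
    ultimately show ?thesis by simp
  qed
  then show ?thesis using openin_T_iff by blast
qed

end

locale AF_transverse = AF_limit X R T Rs Ts
  for X :: "'a topology" and R :: "('a \<times> 'a) set" and T :: "('a \<times> 'a) topology"
    and Rs :: "nat \<Rightarrow> ('a \<times> 'a) set" and Ts :: "nat \<Rightarrow> ('a \<times> 'a) topology" +
  fixes S :: "('a \<times> 'a) set" and TS :: "('a \<times> 'a) topology"
    and h :: "('a \<times> 'a) \<times> ('a \<times> 'a) \<Rightarrow> ('a \<times> 'a) \<times> ('a \<times> 'a)"
  assumes Hausdorff_X: "Hausdorff_space X"
    and CEER_S: "CEER X S TS"
    and R_Int_S: "R \<inter> S = Id_on (topspace X)"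
    and homeomorphic_h: "homeomorphic_map (fibprod_top R T S TS) (fibprod_top S TS R T) h"
    and h_ends: "\<forall>q \<in> fibprod R S. fst (fst (h q)) = fst (fst q) \<and> snd (snd (h q)) = snd (snd q)"
begin

lemma etale_eqrel_S: "etale_eqrel X S TS"
  using CEER_S unfolding CEER_def by blast

lemma topspace_TS: "topspace TS = S"
  using etale_eqrel_S unfolding etale_eqrel_def by blast

lemma S_sym: "(x,y) \<in> S \<Longrightarrow> (y,x) \<in> S"
  and S_trans: "(x,y) \<in> S \<Longrightarrow> (y,z) \<in> S \<Longrightarrow> (x,z) \<in> S"
  and R_sym: "(x,y) \<in> R \<Longrightarrow> (y,x) \<in> R"
  and R_trans: "(x,y) \<in> R \<Longrightarrow> (y,z) \<in> R \<Longrightarrow> (x,z) \<in> R"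
  using etale_eqrel_S equiv_R unfolding etale_eqrel_def equiv_def sym_def trans_def by blast+

lemma h_image: "h ` fibprod R S = fibprod S R"
proof -
  have "topspace (fibprod_top R T S TS) = fibprod R S" "topspace (fibprod_top S TS R T) = fibprod S R"
    using topspace_T topspace_TS unfolding fibprod_top_def fibprod_def by auto
  then show ?thesis using homeomorphic_imp_surjective_map[OF homeomorphic_h] by simp
qed

lemma h_completes_square:
  assumes "(x,y) \<in> R" "(y,z) \<in> S"
  obtains w where "(x,w) \<in> S" "(w,z) \<in> R" "h ((x,y),(y,z)) = ((x,w),(w,z))"
proof -
  have q: "((x,y),(y,z)) \<in> fibprod R S" using assms unfolding fibprod_def by blast
  then obtain a w b where "h ((x,y),(y,z)) = ((a,w),(w,b))" "(a,w) \<in> S" "(w,b) \<in> R"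
    using h_image unfolding fibprod_def by blast
  moreover have "a = x" "b = z" using h_ends q calculation(1) by auto
  ultimately show thesis using that by blast
qed

lemma square_corner_unique:
  assumes "(x,w) \<in> S" "(w,z) \<in> R" "(x,w') \<in> S" "(w',z) \<in> R"
  shows "w = w'"
proof -
  have "(w,w') \<in> R \<inter> S" using assms S_sym S_trans R_sym R_trans by blast
  then show ?thesis using R_Int_S by (auto simp: Id_on_def)
qed

lemma h_square:
  assumes "(x,y) \<in> R" "(y,z) \<in> S" "(x,w) \<in> S" "(w,z) \<in> R"
  shows "h ((x,y),(y,z)) = ((x,w),(w,z))"
  using h_completes_square[OF assms(1,2)] square_corner_unique assms(3,4) by metis

definition Rs' :: "nat \<Rightarrow> ('a \<times> 'a) set" where
  "Rs' n = {(x,y) \<in> Rs n. \<forall>w z. (y,z) \<in> S \<longrightarrow> (x,w) \<in> S \<longrightarrow> (w,z) \<in> R \<longrightarrow> (w,z) \<in> Rs n}"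

lemma Rs'_subset: "Rs' n \<subseteq> Rs n"
  unfolding Rs'_def by blast

lemma Rs'_subset_R: "Rs' n \<subseteq> R"
  using Rs'_subset Rs_subset_R by blast

lemma Rs'_transport:
  assumes "(a,b) \<in> Rs' n" "(a,a') \<in> S" "(b,b') \<in> S" "(a',b') \<in> R"
  shows "(a',b') \<in> Rs' n"
  using assms S_trans unfolding Rs'_def by blast

lemma Rs'_refl: "x \<in> topspace X \<Longrightarrow> (x,x) \<in> Rs' n"
proof -
  assume x: "x \<in> topspace X"
  have Id_Rs: "Id_on (topspace X) \<subseteq> Rs n" using Rs_0 incseqD[OF incseq_Rs, of 0 n] by simp
  have "(w,z) \<in> Rs n" if "(x,z) \<in> S" "(x,w) \<in> S" "(w,z) \<in> R" for w z
  proof -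
    have "(w,z) \<in> R \<inter> S" using that S_sym S_trans by blast
    then show ?thesis using R_Int_S Id_Rs by blast
  qed
  then show ?thesis using x Id_Rs unfolding Rs'_def by blast
qed

lemma Rs'_sym: "(x,y) \<in> Rs' n \<Longrightarrow> (y,x) \<in> Rs' n"
  using Rs'_transport[of x y n] Rs'_subset equiv_Rs[of n] R_sym
  unfolding Rs'_def equiv_def sym_def by blast

lemma Rs'_trans:
  assumes xy: "(x,y) \<in> Rs' n" and yz: "(y,z) \<in> Rs' n"
  shows "(x,z) \<in> Rs' n"
proof -
  have trans_Rs: "trans (Rs n)" using equiv_Rs unfolding equiv_def by blast
  have "(x',z') \<in> Rs n" if z': "(z,z') \<in> S" and x': "(x,x') \<in> S" "(x',z') \<in> R" for x' z'
  proof -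
    obtain y' where y': "(y,y') \<in> S" "(y',z') \<in> R"
      using h_completes_square[OF subsetD[OF Rs'_subset_R yz] z'] by blast
    then have "(y',z') \<in> Rs n" using yz z' unfolding Rs'_def by blast
    moreover have "(x',y') \<in> Rs n"
      using Rs'_transport[OF xy x'(1) y'(1)] x'(2) y'(2) R_sym R_trans Rs'_subset by blast
    ultimately show ?thesis using trans_Rs unfolding trans_def by blast
  qed
  moreover have "(x,z) \<in> Rs n" using xy yz Rs'_subset trans_Rs unfolding trans_def by blast
  ultimately show ?thesis unfolding Rs'_def by blast
qed

lemma equiv_Rs': "equiv (topspace X) (Rs' n)"
proof -
  have "Rs' n \<subseteq> topspace X \<times> topspace X"
    using Rs'_subset_R equiv_R unfolding equiv_def refl_on_def by blast
  then show ?thesis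
    unfolding equiv_def refl_on_def sym_def trans_def using Rs'_refl Rs'_sym Rs'_trans by blast
qed

lemma Rs'_Suc: "Rs' n \<subseteq> Rs' (Suc n)"
  using Rs_Suc unfolding Rs'_def by blast

lemma Rs'_0: "Rs' 0 = Id_on (topspace X)"
  using Rs'_subset[of 0] equiv_Rs'[of 0] Rs_0 unfolding equiv_def refl_on_def by blast

lemma finite_S_fibre: "finite {z. (y,z) \<in> S}"
proof (cases "y \<in> topspace X")
  case True
  have "local_homeomorphism_map TS X rmap" using etale_eqrel_S unfolding etale_eqrel_def by blast
  moreover have "compact_space TS" using CEER_S unfolding CEER_def by blast
  ultimately have "finite {p \<in> topspace TS. rmap p = y}"
    by (rule finite_fibre_local_homeomorphism_map[OF _ _ Hausdorff_imp_t1_space[OF Hausdorff_X] True])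
  moreover have "{z. (y,z) \<in> S} = snd ` {p \<in> topspace TS. rmap p = y}"
    unfolding topspace_TS rmap_def by (auto simp: image_iff)
  ultimately show ?thesis by simp
next
  case False
  then have "{z. (y,z) \<in> S} = {}" using etale_eqrel_S unfolding etale_eqrel_def equiv_def refl_on_def by blast
  then show ?thesis by simp
qed

lemma Union_Rs': "(\<Union>n. Rs' n) = R"
proof
  show "(\<Union>n. Rs' n) \<subseteq> R" using Rs'_subset_R by blast
  show "R \<subseteq> (\<Union>n. Rs' n)"
  proof (rule subrelI)
    fix x y assume xy: "(x,y) \<in> R"
    define C where "C = {(w,z). (y,z) \<in> S \<and> (x,w) \<in> S \<and> (w,z) \<in> R}"
    have "inj_on snd C" using square_corner_unique unfolding C_def inj_on_def by auto
    moreover have "snd ` C \<subseteq> {z. (y,z) \<in> S}" unfolding C_def by auto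
    ultimately have "finite (insert (x,y) C)" using finite_S_fibre inj_on_finite by blast
    moreover have "insert (x,y) C \<subseteq> (\<Union>n. Rs n)" using xy R_eq_Union unfolding C_def by blast
    ultimately obtain m where "insert (x,y) C \<subseteq> Rs m"
      using finite_subset_Union_incseq[OF incseq_Rs] by blast
    then have "(x,y) \<in> Rs' m" unfolding Rs'_def C_def by blast
    then show "(x,y) \<in> (\<Union>n. Rs' n)" by blast
  qed
qed

lemma h_image_fibprod_Rs': "h ` fibprod (Rs' n) S = fibprod S (Rs' n)"
proof
  show "h ` fibprod (Rs' n) S \<subseteq> fibprod S (Rs' n)"
  proof
    fix p assume "p \<in> h ` fibprod (Rs' n) S"
    then obtain x y z where xyz: "(x,y) \<in> Rs' n" "(y,z) \<in> S" "p = h ((x,y),(y,z))"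
      unfolding fibprod_def by blast
    then obtain w where "(x,w) \<in> S" "(w,z) \<in> R" "p = ((x,w),(w,z))"
      using h_completes_square[OF subsetD[OF Rs'_subset_R xyz(1)] xyz(2)] by metis
    then show "p \<in> fibprod S (Rs' n)"
      using Rs'_transport[OF xyz(1)] xyz(2) unfolding fibprod_def by blast
  qed
  show "fibprod S (Rs' n) \<subseteq> h ` fibprod (Rs' n) S"
  proof
    fix p assume "p \<in> fibprod S (Rs' n)"
    then obtain x w z where xwz: "(x,w) \<in> S" "(w,z) \<in> Rs' n" "p = ((x,w),(w,z))"
      unfolding fibprod_def by blast
    then have "p \<in> fibprod S R" using Rs'_subset_R unfolding fibprod_def by blast
    then obtain q where q: "q \<in> fibprod R S" "p = h q" using h_image by blast
    then obtain y where y: "q = ((x,y),(y,z))" "(x,y) \<in> R" "(y,z) \<in> S"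
      using h_ends xwz(3) unfolding fibprod_def by force
    then have "(x,y) \<in> Rs' n" using Rs'_transport[OF xwz(2) S_sym[OF xwz(1)] S_sym] by blast
    then show "p \<in> h ` fibprod (Rs' n) S" using q y unfolding fibprod_def by blast
  qed
qed

definition escaping_squares :: "nat \<Rightarrow> (('a \<times> 'a) \<times> ('a \<times> 'a)) set" where
  "escaping_squares n = {q \<in> fibprod (Rs n) S. snd (h q) \<notin> Rs n}"

lemma Rs'_eq_diff_escaping_squares: "Rs' n = Rs n - fst ` escaping_squares n"
proof (intro equalityI subrelI)
  fix x y assume xy: "(x,y) \<in> Rs' n"
  have "snd (h ((x,y),(y,z))) \<in> Rs n" if z: "(y,z) \<in> S" for z
  proof -
    obtain w where "(x,w) \<in> S" "(w,z) \<in> R" "h ((x,y),(y,z)) = ((x,w),(w,z))"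
      using h_completes_square[OF subsetD[OF Rs'_subset_R xy] z] by blast
    then show ?thesis using xy z unfolding Rs'_def by simp
  qed
  then show "(x,y) \<in> Rs n - fst ` escaping_squares n"
    using xy Rs'_subset unfolding escaping_squares_def fibprod_def by auto
next
  fix x y assume xy: "(x,y) \<in> Rs n - fst ` escaping_squares n"
  have "(w,z) \<in> Rs n" if "(y,z) \<in> S" "(x,w) \<in> S" "(w,z) \<in> R" for w z
  proof -
    have "((x,y),(y,z)) \<in> fibprod (Rs n) S" using xy that(1) unfolding fibprod_def by auto
    then have "snd (h ((x,y),(y,z))) \<in> Rs n" using xy unfolding escaping_squares_def by force
    then show ?thesis using h_square[OF subsetD[OF Rs_subset_R] that(1,2,3)] xy by auto
  qed
  then show "(x,y) \<in> Rs' n" using xy unfolding Rs'_def by blast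
qed

lemma clopen_escaping_squares:
  "openin (fibprod_top (Rs n) (Ts n) S TS) (escaping_squares n)"
  "closedin (fibprod_top (Rs n) (Ts n) S TS) (escaping_squares n)"
proof -
  have top_eq: "fibprod_top (Rs n) (Ts n) S TS = subtopology (fibprod_top R T S TS) (fibprod (Rs n) S)"
    using fibprod_top_subtopology_left[OF Rs_subset_R, where S=S and TS=TS and T=T] topspace_TS subtopology_T_Rs by simp
  have "continuous_map (fibprod_top R T S TS) T (snd \<circ> h)"
    using continuous_map_compose[OF homeomorphic_imp_continuous_map[OF homeomorphic_h]]
      continuous_map_subtopology_snd unfolding fibprod_top_def by blast
  then have cont: "continuous_map (fibprod_top (Rs n) (Ts n) S TS) T (snd \<circ> h)"
    unfolding top_eq by (rule continuous_map_from_subtopology)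
  have "snd (h q) \<in> R" if "q \<in> fibprod (Rs n) S" for q
  proof -
    have "q \<in> fibprod R S" using that Rs_subset_R unfolding fibprod_def by blast
    then have "h q \<in> fibprod S R" using h_image by blast
    then show ?thesis unfolding fibprod_def by auto
  qed
  moreover have "topspace (fibprod_top (Rs n) (Ts n) S TS) = fibprod (Rs n) S"
    using topspace_Ts topspace_TS unfolding fibprod_top_def fibprod_def by auto
  ultimately have eq: "escaping_squares n
      = {q \<in> topspace (fibprod_top (Rs n) (Ts n) S TS). (snd \<circ> h) q \<in> R - Rs n}"
    unfolding escaping_squares_def by auto
  have "closedin T (R - Rs n)"
    using closedin_diff[OF closedin_topspace openin_T_Rs] topspace_T by simp
  then show "closedin (fibprod_top (Rs n) (Ts n) S TS) (escaping_squares n)"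
    unfolding eq by (rule closedin_continuous_map_preimage[OF cont])
  show "openin (fibprod_top (Rs n) (Ts n) S TS) (escaping_squares n)"
    unfolding eq by (rule openin_continuous_map_preimage[OF cont openin_T_diff_Rs])
qed

lemma clopen_Rs': "openin (Ts n) (Rs' n)" "closedin (Ts n) (Rs' n)"
proof -
  have snd_cont: "continuous_map (Ts n) X snd"
    using continuous_map_snd_etale_eqrel etale_eqrel_Rs by blast
  have lh_S: "local_homeomorphism_map TS X fst"
    using etale_eqrel_S unfolding etale_eqrel_def rmap_eq_fst by blast
  have cpt: "compact_space (fibprod_top (Rs n) (Ts n) S TS)"
  proof -
    have "closedin (prod_topology (Ts n) TS) (fibprod (Rs n) S)"
      using closedin_fibprod[OF Hausdorff_X snd_cont continuous_map_local_homeomorphism_map[OF lh_S]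
          topspace_Ts topspace_TS] .
    moreover have "compact_space (prod_topology (Ts n) TS)"
      using CEER_Rs CEER_S unfolding CEER_def by (simp add: compact_space_prod_topology)
    ultimately show ?thesis
      unfolding fibprod_top_def by (intro compact_space_subtopology closedin_compact_space)
  qed
  have "compactin (Ts n) (fst ` escaping_squares n)"
    by (rule image_compactin[OF closedin_compact_space[OF cpt clopen_escaping_squares(2)]])
      (unfold fibprod_top_def, rule continuous_map_subtopology_fst)
  moreover have "Hausdorff_space (Ts n)"
    using etale_eqrel_Rs unfolding etale_eqrel_def by blast
  ultimately have closed_escaping: "closedin (Ts n) (fst ` escaping_squares n)" using compactin_imp_closedin by blast
  have open_escaping: "openin (Ts n) (fst ` escaping_squares n)"
    using open_map_fibprod_fst[OF snd_cont open_map_local_homeomorphism_map[OF lh_S] topspace_Ts topspace_TS]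
      clopen_escaping_squares(1) unfolding open_map_def by blast
  show "openin (Ts n) (Rs' n)" "closedin (Ts n) (Rs' n)"
    unfolding Rs'_eq_diff_escaping_squares
    using openin_diff[OF openin_topspace closed_escaping] closedin_diff[OF closedin_topspace open_escaping]
    by (simp_all add: topspace_Ts)
qed

lemma AF_presentation_Rs': "AF_presentation X R T Rs' (\<lambda>n. subtopology T (Rs' n))"
proof (rule AF_presentation_open_exhaustion[OF topspace_T _ Rs'_0 Rs'_Suc _ Union_Rs'[symmetric]])
  fix n
  have "subtopology T (Rs' n) = subtopology (Ts n) (Rs' n)"
    unfolding subtopology_T_Rs[symmetric] using Rs'_subset by (simp add: subtopology_subtopology Int_absorb1)
  then show "CEER X (Rs' n) (subtopology T (Rs' n))"
    using CEER_clopen_subrelation[OF CEER_Rs equiv_Rs' clopen_Rs'] by simp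
  show "openin T (Rs' n)" using openin_T_if_openin_Ts clopen_Rs'(1) by blast
qed

lemma transverse_Rs': "transverse X (Rs' n) (subtopology T (Rs' n)) S TS"
proof (rule transverse_subrelation[OF homeomorphic_h h_ends Rs'_subset_R _ h_image_fibprod_Rs' topspace_T topspace_TS])
  have "Id_on (topspace X) \<subseteq> Rs' n \<inter> S"
    using equiv_Rs' etale_eqrel_S unfolding etale_eqrel_def equiv_def refl_on_def by blast
  then show "Rs' n \<inter> S = Id_on (topspace X)" using R_Int_S Rs'_subset_R by blast
qed

end

theorem lemma3p5:
  fixes X :: "'a topology"
    and R :: "('a \<times> 'a) set" and T :: "('a \<times> 'a) topology"
    and Rs :: "nat \<Rightarrow> ('a \<times> 'a) set" and Ts :: "nat \<Rightarrow> ('a \<times> 'a) topology"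
    and S :: "('a \<times> 'a) set" and TS :: "('a \<times> 'a) topology"
  assumes "compact_space X" and "metrizable_space X" and "X dim_le 0"
    and "AF_presentation X R T Rs Ts"
    and "CEER X S TS"
    and "transverse X R T S TS"
  shows "\<exists>Rs' Ts'. AF_presentation X R T Rs' Ts' \<and> (\<forall>n. transverse X (Rs' n) (Ts' n) S TS)"
proof -
  obtain h where "R \<inter> S = Id_on (topspace X)"
    and "homeomorphic_map (fibprod_top R T S TS) (fibprod_top S TS R T) h"
    and "\<forall>q \<in> fibprod R S. fst (fst (h q)) = fst (fst q) \<and> snd (snd (h q)) = snd (snd q)"
    using assms(6) unfolding transverse_def by blast
  then interpret AF_transverse X R T Rs Ts S TS h
    using metrizable_imp_Hausdorff_space[OF assms(2)] assms(4,5) by unfold_locales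
  show ?thesis
    using AF_presentation_Rs' transverse_Rs' by blast
qed

end
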